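(* Let $G$ be an $r$-graph, $\mathcal{P}$ a partition of $E(G)$, and $A,B\subseteq\mathbb{N}$. Suppose that for all $F,H\in\mathcal{M}'$ that are $(A,B)$-mergeable, there exist $F',H'\in\mathcal{P}$ with $F'\subseteq F$, $H'\subseteq H$ such that $F'$ and $H'$ are $(A,B)$-mergeable. Then for every $F\in\mathcal{M}'$ and every $F_0\in\mathcal{M}'$ with $F_0\subseteq F$, there is an ordering $F_1,\dots,F_s$ of the elements of $\mathcal{P}$ contained in $F\setminus F_0$ such that for every $i\in[s]$ the subgraphs $\bigcup_{j=0}^{i-1}F_j$ and $F_i$ are $\{A,B\}$-mergeable (in particular, $\bigcup_{j=0}^iF_j\in\mathcal{M}'$ for every $i$).
   Context: An $r$-graph is an $r$-uniform hypergraph; subgraphs of $G$ are identified with their edge sets, and their vertex sets are the unions of their edges. For an $r$-graph $F$ and distinct vertices $x,y$ (not necessarily in $F$), $C_F(xy)$ is the set of integers $i\geq 0$ for which there exist $i$ distinct edges $X_1,\dots,X_i$ of $F$ with $|\{x,y\}\cup\bigcup_{j=1}^iX_j|\le ri-2i+2$. For $A,B\subseteq\mathbb{N}$, two edge-disjoint subgraphs $F,H\subseteq G$ are $(A,B)$-mergeable (via $uv$) if there is a pair $uv$ with $A\subseteq C_F(uv)$ and $B\subseteq C_H(uv)$; they are $\{A,B\}$-mergeable if $F,H$ are $(A,B)$-mergeable or $H,F$ are $(A,B)$-mergeable. Given a partition $\mathcal{P}$ of $E(G)$, $\mathcal{M}'=\mathcal{M}'_{\{A,B\}}(\mathcal{P})$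 is the smallest family of subgraphs of $G$ containing all elements of $\mathcal{P}$ and closed under taking the union of two $\{A,B\}$-mergeable members (its elements are called partial $\{A,B\}$-clusters; each is a union of elements of $\mathcal{P}$). *)

theory Defs
  imports Main
begin

text \<open>An r-graph: a finite set of edges, each a vertex set of size exactly r.
  Subgraphs are identified with their edge sets.\<close>
definition r_graph :: "nat \<Rightarrow> 'v set set \<Rightarrow> bool" where
  "r_graph r G \<longleftrightarrow> finite G \<and> (\<forall>e\<in>G. finite e \<and> card e = r)"

definition edge_partition :: "'v set set \<Rightarrow> 'v set set set \<Rightarrow> bool" where
  "edge_partition G P \<longleftrightarrow> \<Union>P = G \<and> {} \<notin> P \<and>
     (\<forall>X\<in>P. \<forall>Y\<in>P. X \<noteq> Y \<longrightarrow> X \<inter> Y = {})"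

definition Cset :: "nat \<Rightarrow> 'v set set \<Rightarrow> 'v \<Rightarrow> 'v \<Rightarrow> nat set" where
  "Cset r F x y = {i. \<exists>S. S \<subseteq> F \<and> finite S \<and> card S = i \<and>
      int (card ({x, y} \<union> \<Union>S)) \<le> int r * int i - 2 * int i + 2}"

definition mergeable :: "nat \<Rightarrow> 'v set set \<Rightarrow> nat set \<Rightarrow> nat set \<Rightarrow> 'v set set \<Rightarrow> 'v set set \<Rightarrow> bool" where
  "mergeable r G A B F H \<longleftrightarrow> F \<subseteq> G \<and> H \<subseteq> G \<and> F \<inter> H = {} \<and>
     (\<exists>u\<in>\<Union>G. \<exists>v\<in>\<Union>G. u \<noteq> v \<and> A \<subseteq> Cset r F u v \<and> B \<subseteq> Cset r H u v)"

definition sym_mergeable :: "nat \<Rightarrow> 'v set set \<Rightarrow> nat set \<Rightarrow> nat set \<Rightarrow> 'v set set \<Rightarrow> 'v set set \<Rightarrow> bool" where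
  "sym_mergeable r G A B F H \<longleftrightarrow> mergeable r G A B F H \<or> mergeable r G A B H F"

text \<open>M'_{A,B}(P): smallest family containing P and closed under unions of two
  {A,B}-mergeable members (partial {A,B}-clusters).\<close>
inductive_set partial_clusters :: "nat \<Rightarrow> 'v set set \<Rightarrow> 'v set set set \<Rightarrow> nat set \<Rightarrow> nat set \<Rightarrow> 'v set set set"
  for r G P A B where
  base: "X \<in> P \<Longrightarrow> X \<in> partial_clusters r G P A B"
| merge: "F \<in> partial_clusters r G P A B \<Longrightarrow> H \<in> partial_clusters r G P A B \<Longrightarrow>
          sym_mergeable r G A B F H \<Longrightarrow> F \<union> H \<in> partial_clusters r G P A B"

end

theory Submission
  imports Defs
begin

text \<open>The blocks of \<open>\<P>\<close> inside a partial cluster \<open>F\<close> form a connected family under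
  \<open>{A,B}\<close>-mergeability: when two clusters are merged, the hypothesis supplies a
  mergeable pair of blocks joining their block families. Given \<open>F\<^sub>0 \<subseteq> F\<close>, connectivity
  yields a block of \<open>F\<close> outside \<open>F\<^sub>0\<close> that is mergeable with some block of \<open>F\<^sub>0\<close>, and
  hence, by monotonicity of \<open>C\<^sub>F(uv)\<close> in \<open>F\<close>, with \<open>F\<^sub>0\<close> itself. Adding it to \<open>F\<^sub>0\<close> and
  repeating produces the ordering.\<close>

definition blocks :: "'v set set set \<Rightarrow> 'v set set \<Rightarrow> 'v set set set" where
  "blocks P F = {X\<in>P. X \<subseteq> F}"

definition merge_connected ::
    "nat \<Rightarrow> 'v set set \<Rightarrow> nat set \<Rightarrow> nat set \<Rightarrow> 'v set set set \<Rightarrow> bool" where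
  "merge_connected r G A B \<X> \<longleftrightarrow>
     (\<forall>T\<subseteq>\<X>. T \<noteq> {} \<longrightarrow> T \<noteq> \<X> \<longrightarrow> (\<exists>Y\<in>T. \<exists>X\<in>\<X> - T. sym_mergeable r G A B Y X))"

definition mergeability_witnessed_by_blocks ::
    "nat \<Rightarrow> 'v set set \<Rightarrow> 'v set set set \<Rightarrow> nat set \<Rightarrow> nat set \<Rightarrow> bool" where
  "mergeability_witnessed_by_blocks r G P A B \<longleftrightarrow>
     (\<forall>F\<in>partial_clusters r G P A B. \<forall>H\<in>partial_clusters r G P A B.
        mergeable r G A B F H \<longrightarrow> (\<exists>F'\<in>P. \<exists>H'\<in>P. F' \<subseteq> F \<and> H' \<subseteq> H \<and> mergeable r G A B F' H'))"

definition merge_sequence ::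
    "nat \<Rightarrow> 'v set set \<Rightarrow> 'v set set set \<Rightarrow> nat set \<Rightarrow> nat set \<Rightarrow> 'v set set \<Rightarrow> 'v set set list \<Rightarrow> bool" where
  "merge_sequence r G P A B F0 Fs \<longleftrightarrow>
     (\<forall>i<length Fs. sym_mergeable r G A B (F0 \<union> \<Union>(set (take i Fs))) (Fs ! i) \<and>
        F0 \<union> \<Union>(set (take (Suc i) Fs)) \<in> partial_clusters r G P A B)"

lemma sym_mergeable_commute: "sym_mergeable r G A B F H \<longleftrightarrow> sym_mergeable r G A B H F"
  unfolding sym_mergeable_def by blast

lemma Cset_mono: "F \<subseteq> F' \<Longrightarrow> Cset r F u v \<subseteq> Cset r F' u v"
  unfolding Cset_def by blast

lemma sym_mergeable_superset:
  assumes "sym_mergeable r G A B Y X" "Y \<subseteq> C" "C \<subseteq> G" "C \<inter> X = {}"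
  shows "sym_mergeable r G A B C X"
  using assms Cset_mono[OF assms(2)] unfolding sym_mergeable_def mergeable_def by blast

lemma partial_clusters_subset:
  assumes "edge_partition G P" "F \<in> partial_clusters r G P A B"
  shows "F \<subseteq> G"
  using assms(2,1)
  by induction (auto simp: edge_partition_def sym_mergeable_def mergeable_def)

lemma Union_blocks_partial_cluster:
  "F \<in> partial_clusters r G P A B \<Longrightarrow> \<Union>(blocks P F) = F"
  unfolding blocks_def by (induction rule: partial_clusters.induct) blast+

lemma blocks_partial_cluster_nonempty:
  "F \<in> partial_clusters r G P A B \<Longrightarrow> blocks P F \<noteq> {}"
  by (induction rule: partial_clusters.induct) (auto simp: blocks_def)

lemma block_subset_if_meets:
  assumes "edge_partition G P" "X \<in> P" "\<Union>(blocks P F) = F" "X \<inter> F \<noteq> {}"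
  shows "X \<subseteq> F"
proof -
  obtain x Y where "x \<in> X" "Y \<in> P" "Y \<subseteq> F" "x \<in> Y"
    using assms(3,4) unfolding blocks_def by blast
  with assms(1,2) have "X = Y" unfolding edge_partition_def by blast
  with \<open>Y \<subseteq> F\<close> show ?thesis by simp
qed

lemma blocks_Un:
  assumes "edge_partition G P" "\<Union>(blocks P F) = F" "\<Union>(blocks P H) = H"
  shows "blocks P (F \<union> H) = blocks P F \<union> blocks P H"
proof -
  have "X \<subseteq> F \<or> X \<subseteq> H" if "X \<in> P" "X \<subseteq> F \<union> H" for X
  proof -
    have "X \<noteq> {}" using assms(1) \<open>X \<in> P\<close> unfolding edge_partition_def by blast
    then have "X \<inter> F \<noteq> {} \<or> X \<inter> H \<noteq> {}" using \<open>X \<subseteq> F \<union> H\<close> by blast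
    then show ?thesis using block_subset_if_meets[OF assms(1) \<open>X \<in> P\<close>] assms(2,3) by blast
  qed
  then show ?thesis unfolding blocks_def by blast
qed

lemma merge_connected_singleton: "merge_connected r G A B {X}"
  unfolding merge_connected_def by blast

lemma merge_connected_Un:
  assumes "merge_connected r G A B \<X>\<^sub>1" "merge_connected r G A B \<X>\<^sub>2"
    and "Y\<^sub>1 \<in> \<X>\<^sub>1" "Y\<^sub>2 \<in> \<X>\<^sub>2" "sym_mergeable r G A B Y\<^sub>1 Y\<^sub>2"
  shows "merge_connected r G A B (\<X>\<^sub>1 \<union> \<X>\<^sub>2)"
  unfolding merge_connected_def
proof (intro allI impI)
  fix T assume T: "T \<subseteq> \<X>\<^sub>1 \<union> \<X>\<^sub>2" "T \<noteq> {}" "T \<noteq> \<X>\<^sub>1 \<union> \<X>\<^sub>2"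
  show "\<exists>Y\<in>T. \<exists>X\<in>\<X>\<^sub>1 \<union> \<X>\<^sub>2 - T. sym_mergeable r G A B Y X"
  proof (cases "T \<inter> \<X>\<^sub>1 \<in> {{}, \<X>\<^sub>1} \<and> T \<inter> \<X>\<^sub>2 \<in> {{}, \<X>\<^sub>2}")
    case True
    with T have "T \<inter> \<X>\<^sub>1 = \<X>\<^sub>1 \<and> T \<inter> \<X>\<^sub>2 = {} \<or> T \<inter> \<X>\<^sub>1 = {} \<and> T \<inter> \<X>\<^sub>2 = \<X>\<^sub>2" by blast
    then show ?thesis
      using assms(3-5) sym_mergeable_commute by blast
  next
    case False
    then have "merge_connected r G A B \<X>\<^sub>1 \<and> T \<inter> \<X>\<^sub>1 \<notin> {{}, \<X>\<^sub>1} \<or>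
               merge_connected r G A B \<X>\<^sub>2 \<and> T \<inter> \<X>\<^sub>2 \<notin> {{}, \<X>\<^sub>2}"
      using assms(1,2) by blast
    then show ?thesis
      unfolding merge_connected_def by (elim disjE conjE allE[of _ "T \<inter> _"]) blast+
  qed
qed

lemma sym_mergeable_blocks:
  assumes "mergeability_witnessed_by_blocks r G P A B"
    and "F \<in> partial_clusters r G P A B" "H \<in> partial_clusters r G P A B"
    and "sym_mergeable r G A B F H"
  obtains Y X where "Y \<in> blocks P F" "X \<in> blocks P H" "sym_mergeable r G A B Y X"
proof -
  have "\<exists>Y\<in>blocks P F'. \<exists>X\<in>blocks P H'. mergeable r G A B Y X"
    if "F' \<in> partial_clusters r G P A B" "H' \<in> partial_clusters r G P A B"
      "mergeable r G A B F' H'" for F' H'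
    using assms(1) that unfolding mergeability_witnessed_by_blocks_def blocks_def by blast
  then show ?thesis
    using assms(2-4) that sym_mergeable_commute unfolding sym_mergeable_def by blast
qed

lemma merge_connected_blocks:
  assumes "edge_partition G P" "mergeability_witnessed_by_blocks r G P A B"
    and "F \<in> partial_clusters r G P A B"
  shows "merge_connected r G A B (blocks P F)"
  using assms(3)
proof induction
  case (base X)
  have "Z = X" if "Z \<in> P" "Z \<subseteq> X" for Z
  proof -
    have "Z \<noteq> {}" using assms(1) \<open>Z \<in> P\<close> unfolding edge_partition_def by blast
    with \<open>Z \<subseteq> X\<close> have "Z \<inter> X \<noteq> {}" by blast
    with assms(1) base \<open>Z \<in> P\<close> show "Z = X" unfolding edge_partition_def by blast
  qed
  with base have "blocks P X = {X}" unfolding blocks_def by blast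
  then show ?case by (simp add: merge_connected_singleton)
next
  case (merge F H)
  obtain Y X where "Y \<in> blocks P F" "X \<in> blocks P H" "sym_mergeable r G A B Y X"
    using sym_mergeable_blocks[OF assms(2) merge.hyps] .
  with merge.IH have "merge_connected r G A B (blocks P F \<union> blocks P H)"
    by (rule merge_connected_Un)
  moreover have "blocks P (F \<union> H) = blocks P F \<union> blocks P H"
    using merge.hyps(1,2) by (intro blocks_Un[OF assms(1)] Union_blocks_partial_cluster)
  ultimately show ?case by simp
qed

lemma exists_block_mergeable_with_subcluster:
  assumes "edge_partition G P" "mergeability_witnessed_by_blocks r G P A B"
    and "F \<in> partial_clusters r G P A B" "F0 \<in> partial_clusters r G P A B" "F0 \<subseteq> F"
    and "X0 \<in> P" "X0 \<subseteq> F - F0"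
  obtains X where "X \<in> P" "X \<subseteq> F - F0" "sym_mergeable r G A B F0 X"
proof -
  have F0_blocks: "\<Union>(blocks P F0) = F0"
    using assms(4) by (rule Union_blocks_partial_cluster)
  have "X0 \<noteq> {}" using assms(1,6) unfolding edge_partition_def by blast
  then have "X0 \<in> blocks P F" "X0 \<notin> blocks P F0"
    using assms(6,7) unfolding blocks_def by auto
  then have "blocks P F0 \<noteq> blocks P F" by blast
  moreover have "blocks P F0 \<subseteq> blocks P F"
    using assms(5) unfolding blocks_def by auto
  ultimately obtain Y X where YX: "Y \<in> blocks P F0" "X \<in> blocks P F - blocks P F0"
      "sym_mergeable r G A B Y X"
    using merge_connected_blocks[OF assms(1-3)] blocks_partial_cluster_nonempty[OF assms(4)]
    unfolding merge_connected_def by blast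
  then have X: "X \<in> P" "X \<subseteq> F" "\<not> X \<subseteq> F0"
    unfolding blocks_def by auto
  then have "X \<inter> F0 = {}"
    using block_subset_if_meets[OF assms(1) _ F0_blocks] by blast
  moreover have "Y \<subseteq> F0" using YX(1) unfolding blocks_def by blast
  ultimately have "sym_mergeable r G A B F0 X"
    using sym_mergeable_superset[OF YX(3)] partial_clusters_subset[OF assms(1,4)] by blast
  moreover have "X \<subseteq> F - F0" using X(2) \<open>X \<inter> F0 = {}\<close> by blast
  ultimately show ?thesis using that X(1) by blast
qed

lemma merge_sequence_Cons:
  assumes "sym_mergeable r G A B C X" "C \<union> X \<in> partial_clusters r G P A B"
    and "merge_sequence r G P A B (C \<union> X) Fs"
  shows "merge_sequence r G P A B C (X # Fs)"
  unfolding merge_sequence_def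
proof (intro allI impI)
  fix i assume "i < length (X # Fs)"
  then show "sym_mergeable r G A B (C \<union> \<Union>(set (take i (X # Fs)))) ((X # Fs) ! i) \<and>
      C \<union> \<Union>(set (take (Suc i) (X # Fs))) \<in> partial_clusters r G P A B"
    using assms unfolding merge_sequence_def
    by (cases i) (simp_all add: Un_assoc)
qed

lemma merge_sequence_exists:
  assumes "finite P" "edge_partition G P" "mergeability_witnessed_by_blocks r G P A B"
    and "F \<in> partial_clusters r G P A B" "F0 \<in> partial_clusters r G P A B" "F0 \<subseteq> F"
  shows "\<exists>Fs. distinct Fs \<and> set Fs = {X\<in>P. X \<subseteq> F - F0} \<and> merge_sequence r G P A B F0 Fs"
  using assms(5,6)
proof (induction "card {X\<in>P. X \<subseteq> F - F0}" arbitrary: F0 rule: less_induct)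
  case less
  show ?case
  proof (cases "{X\<in>P. X \<subseteq> F - F0} = {}")
    case True
    then show ?thesis unfolding merge_sequence_def by (intro exI[of _ "[]"]) simp
  next
    case False
    then obtain X where X: "X \<in> P" "X \<subseteq> F - F0" "sym_mergeable r G A B F0 X"
      using exists_block_mergeable_with_subcluster[OF assms(2-4) less.prems] by blast
    have grown: "F0 \<union> X \<in> partial_clusters r G P A B"
      using less.prems(1) partial_clusters.base[OF X(1)] X(3) by (rule partial_clusters.merge)
    have "X \<noteq> {}" "\<forall>Z\<in>P. Z \<noteq> X \<longrightarrow> Z \<inter> X = {}"
      using assms(2) X(1) unfolding edge_partition_def by blast+
    then have remaining: "{Z\<in>P. Z \<subseteq> F - (F0 \<union> X)} = {Z\<in>P. Z \<subseteq> F - F0} - {X}"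
      by blast
    have "card ({Z\<in>P. Z \<subseteq> F - F0} - {X}) < card {Z\<in>P. Z \<subseteq> F - F0}"
      using X(1,2) assms(1) by (intro card_Diff1_less) auto
    then obtain Fs where "distinct Fs" "set Fs = {Z\<in>P. Z \<subseteq> F - F0} - {X}"
        "merge_sequence r G P A B (F0 \<union> X) Fs"
      using less.hyps[OF _ grown] less.prems(2) X(2) unfolding remaining by blast
    then show ?thesis
      using X merge_sequence_Cons[OF X(3) grown] by (intro exI[of _ "X # Fs"]) auto
  qed
qed

theorem lemma5p2:
  fixes r :: nat and G :: "'v set set" and P :: "'v set set set" and A B :: "nat set"
  assumes "r_graph r G"
    and "edge_partition G P"
    and "\<forall>F\<in>partial_clusters r G P A B. \<forall>H\<in>partial_clusters r G P A B.
           mergeable r G A B F H \<longrightarrow>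
           (\<exists>F'\<in>P. \<exists>H'\<in>P. F' \<subseteq> F \<and> H' \<subseteq> H \<and> mergeable r G A B F' H')"
  shows "\<forall>F\<in>partial_clusters r G P A B. \<forall>F0\<in>partial_clusters r G P A B. F0 \<subseteq> F \<longrightarrow>
           (\<exists>Fs. distinct Fs \<and> set Fs = {X\<in>P. X \<subseteq> F - F0} \<and>
              (\<forall>i<length Fs.
                 sym_mergeable r G A B (F0 \<union> \<Union>(set (take i Fs))) (Fs ! i) \<and>
                 F0 \<union> \<Union>(set (take (Suc i) Fs)) \<in> partial_clusters r G P A B))"
proof -
  have "finite P"
    using assms(1,2) finite_UnionD unfolding r_graph_def edge_partition_def by blast
  moreover have "mergeability_witnessed_by_blocks r G P A B"
    using assms(3) unfolding mergeability_witnessed_by_blocks_def .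
  ultimately show ?thesis
    using merge_sequence_exists[OF _ assms(2)] unfolding merge_sequence_def by blast
qed

end
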